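(* Let $n\ge 1$ be an integer. Knowlton-Graham partitions of $\{1,\ldots,n\}$ exist if and only if there exist a positive integer $m$ and an $m\times m$ matrix with entries in $\{0,1\}$ whose row sums $(r_1,\ldots,r_m)$ and column sums $(c_1,\ldots,c_m)$ satisfy: $j$ divides $r_j$ and $j$ divides $c_j$ for every $1\le j\le m$, and $r_1+\cdots+r_m=c_1+\cdots+c_m=n$.
   Context: A pair of Knowlton-Graham partitions of $\{1,\ldots,n\}$ consists of two partitions $A_1,\ldots,A_p$ and $B_1,\ldots,B_q$ of $\{1,\ldots,n\}$ into nonempty pairwise disjoint sets such that, for every pair of positive integers $(j,k)$, at most one element of $\{1,\ldots,n\}$ lies both in some $A_i$ with $|A_i|=j$ and in some $B_l$ with $|B_l|=k$. *)

theory Defs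
  imports Main "HOL-Library.Disjoint_Sets"
begin

definition KG_pair :: "nat \<Rightarrow> nat set set \<Rightarrow> nat set set \<Rightarrow> bool" where
  "KG_pair n A B \<longleftrightarrow> partition_on {1..n} A \<and> partition_on {1..n} B \<and>
     (\<forall>j k. 0 < j \<longrightarrow> 0 < k \<longrightarrow>
        card {x \<in> {1..n}. (\<exists>a\<in>A. x \<in> a \<and> card a = j) \<and> (\<exists>b\<in>B. x \<in> b \<and> card b = k)} \<le> 1)"

definition KG_exists :: "nat \<Rightarrow> bool" where
  "KG_exists n \<longleftrightarrow> (\<exists>A B. KG_pair n A B)"

end

theory Submission
  imports Defs
begin

(* Give each point x the type (j, k), where j and k are the sizes of the blocks of A and of B
   containing x; the Knowlton-Graham condition says that the type map is injective. Counting
   the points of each type therefore gives a 0-1 matrix whose j-th row sum, the number of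
   points in A-blocks of size j, is a multiple of j, and likewise for columns. Conversely,
   label the n cells of the support of such a matrix bijectively by {1..n} and cut the
   points of row j (column k) into blocks of size j (size k): the resulting partitions have
   the labelling as their type map. *)

definition size_class :: "'a set set \<Rightarrow> nat \<Rightarrow> 'a set" where
  "size_class P j = \<Union>{p \<in> P. card p = j}"

lemma size_class_eq:
  assumes "partition_on X P"
  shows "size_class P j = {x \<in> X. \<exists>p\<in>P. x \<in> p \<and> card p = j}"
  using partition_onD1[OF assms] unfolding size_class_def by auto

lemma size_class_subset: "partition_on X P \<Longrightarrow> size_class P j \<subseteq> X"
  by (auto simp: size_class_eq)

lemma size_class_eq_fibre:
  assumes "partition_on X P" "\<forall>p\<in>P. \<forall>x\<in>p. card p = g x"
  shows "size_class P j = {x \<in> X. g x = j}"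
  using assms partition_onD1[OF assms(1)] by (auto simp: size_class_eq)

lemma disjoint_family_size_class:
  assumes "partition_on X P"
  shows "disjoint_family (size_class P)"
  unfolding disjoint_family_on_def
proof (intro ballI impI equalityI subsetI)
  fix j k :: nat and x
  assume "j \<noteq> k" and "x \<in> size_class P j \<inter> size_class P k"
  then obtain p q where "p \<in> P" "q \<in> P" "p \<noteq> q" "x \<in> p \<inter> q"
    unfolding size_class_def by auto
  then show "x \<in> {}"
    using partition_onD2[OF assms] by (auto simp: disjoint_def)
qed simp

lemma dvd_card_size_class:
  assumes "finite X" "partition_on X P"
  shows "j dvd card (size_class P j)"
proof -
  have blocks_finite: "finite p" if "p \<in> P" for p
    using assms(1) partition_onD1[OF assms(2)] that by (meson Union_upper finite_subset)
  have "card (size_class P j) = sum card {p \<in> P. card p = j}"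
    unfolding size_class_def using partition_onD2[OF assms(2)] blocks_finite
    by (intro card_Union_disjoint) (auto simp: pairwise_def disjoint_def disjnt_def)
  also have "\<dots> = card {p \<in> P. card p = j} * j"
    by simp
  finally show ?thesis
    by simp
qed

lemma card_block_in_range:
  assumes "finite X" "partition_on X P" "p \<in> P"
  shows "card p \<in> {1..card X}"
proof -
  have "p \<subseteq> X" "p \<noteq> {}"
    using assms partition_onD1 partition_onD3 by blast+
  then show ?thesis
    using assms(1) by (simp add: Suc_le_eq card_gt_0_iff card_mono finite_subset)
qed

lemma sum_card_Int_size_class:
  assumes "finite X" "partition_on X P" "Y \<subseteq> X"
  shows "(\<Sum>k=1..card X. card (Y \<inter> size_class P k)) = card Y"
proof -
  have "disjoint_family (\<lambda>k. Y \<inter> size_class P k)"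
    using disjoint_family_size_class[OF assms(2)] by (rule disjoint_family_subset) blast
  then have "disjoint_family_on (\<lambda>k. Y \<inter> size_class P k) {1..card X}"
    by (rule disjoint_family_on_mono[OF subset_UNIV])
  then have "card (\<Union>k\<in>{1..card X}. Y \<inter> size_class P k) = (\<Sum>k=1..card X. card (Y \<inter> size_class P k))"
    using finite_subset[OF assms(3,1)] by (intro card_UN_disjoint') auto
  moreover have "(\<Union>k\<in>{1..card X}. Y \<inter> size_class P k) = Y"
  proof
    show "Y \<subseteq> (\<Union>k\<in>{1..card X}. Y \<inter> size_class P k)"
    proof
      fix y assume "y \<in> Y"
      then obtain p where "p \<in> P" "y \<in> p"
        using assms(3) partition_onD1[OF assms(2)] by blast
      then show "y \<in> (\<Union>k\<in>{1..card X}. Y \<inter> size_class P k)"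
        using \<open>y \<in> Y\<close> card_block_in_range[OF assms(1,2)] unfolding size_class_def by blast
    qed
  qed blast
  ultimately show ?thesis
    by simp
qed

lemma dvd_card_fibre_Diff:
  assumes "finite X" "\<forall>i. i dvd card {x \<in> X. g x = i}"
    and "Y \<subseteq> {x \<in> X. g x = j}" "card Y = j"
  shows "i dvd card {x \<in> X - Y. g x = i}"
proof (cases "i = j")
  case True
  then have "{x \<in> X - Y. g x = i} = {x \<in> X. g x = j} - Y"
    by auto
  moreover have "card ({x \<in> X. g x = j} - Y) = card {x \<in> X. g x = j} - j"
    using assms(1,3,4) by (simp add: card_Diff_subset finite_subset)
  ultimately show ?thesis
    using True assms(2) by (simp add: dvd_diff_nat)
next
  case False
  then have "{x \<in> X - Y. g x = i} = {x \<in> X. g x = i}"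
    using assms(3) by auto
  then show ?thesis
    using assms(2) by simp
qed

lemma partition_with_block_sizes:
  assumes "finite X" "\<forall>x\<in>X. 0 < g x" "\<forall>j. j dvd card {x \<in> X. g x = j}"
  shows "\<exists>P. partition_on X P \<and> (\<forall>p\<in>P. \<forall>x\<in>p. card p = g x)"
  using assms
proof (induction X rule: finite_psubset_induct)
  case (psubset X)
  show ?case
  proof (cases "X = {}")
    case True
    then show ?thesis
      by (intro exI[of _ "{}"]) (simp add: partition_on_empty)
  next
    case False
    then obtain x where "x \<in> X"
      by blast
    define j where "j = g x"
    define F where "F = {y \<in> X. g y = j}"
    have "0 < j" "0 < card F"
      using psubset.hyps psubset.prems(1) \<open>x \<in> X\<close> by (auto simp: j_def F_def card_gt_0_iff)
    moreover have "j dvd card F"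
      using psubset.prems(2) by (simp add: F_def)
    ultimately obtain Y where Y: "Y \<subseteq> F" "card Y = j"
      using dvd_imp_le obtain_subset_with_card_n by metis
    have "Y \<noteq> {}"
      using Y \<open>0 < j\<close> by auto
    have "X - Y \<subset> X"
      using Y \<open>Y \<noteq> {}\<close> by (auto simp: F_def)
    moreover have "\<forall>y\<in>X - Y. 0 < g y"
      using psubset.prems(1) by blast
    ultimately have "\<exists>P. partition_on (X - Y) P \<and> (\<forall>p\<in>P. \<forall>y\<in>p. card p = g y)"
      using dvd_card_fibre_Diff[OF psubset.hyps psubset.prems(2) Y[unfolded F_def]]
      by (intro psubset.IH) auto
    then obtain P where P: "partition_on (X - Y) P" "\<forall>p\<in>P. \<forall>y\<in>p. card p = g y"
      by blast
    have "partition_on X (insert Y P)"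
      using P(1) Y \<open>Y \<noteq> {}\<close> partition_onD1[OF P(1)]
      by (subst partition_on_insert) (auto simp: F_def disjnt_def)
    moreover have "\<forall>y\<in>Y. card Y = g y"
      using Y by (auto simp: F_def)
    ultimately show ?thesis
      using P(2) by blast
  qed
qed

lemma sum_zero_one_eq_card:
  assumes "finite L" "\<forall>l\<in>L. f l \<in> {0, 1::nat}"
  shows "sum f L = card {l \<in> L. f l = 1}"
proof -
  have "sum f L = (\<Sum>l\<in>L. of_bool (f l = 1))"
    using assms(2) by (intro sum.cong) auto
  also have "\<dots> = card {l \<in> L. f l = 1}"
    using assms(1) by (simp add: Collect_conj_eq Int_commute)
  finally show ?thesis .
qed

lemma bij_betw_card_filter:
  assumes "bij_betw f X Y"
  shows "card {x \<in> X. P (f x)} = card {y \<in> Y. P y}"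
proof (rule bij_betw_same_card[OF bij_betw_subset[OF assms]])
  show "f ` {x \<in> X. P (f x)} = {y \<in> Y. P y}"
    using bij_betw_imp_surj_on[OF assms] by auto
qed auto

lemma KG_pair_iff_size_classes:
  "KG_pair n A B \<longleftrightarrow> partition_on {1..n} A \<and> partition_on {1..n} B \<and>
     (\<forall>j k. 0 < j \<longrightarrow> 0 < k \<longrightarrow> card (size_class A j \<inter> size_class B k) \<le> 1)"
proof (cases "partition_on {1..n} A \<and> partition_on {1..n} B")
  case True
  then have "{x \<in> {1..n}. (\<exists>a\<in>A. x \<in> a \<and> card a = j) \<and> (\<exists>b\<in>B. x \<in> b \<and> card b = k)}
      = size_class A j \<inter> size_class B k" for j k
    by (auto simp: size_class_eq)
  then show ?thesis
    unfolding KG_pair_def by (simp only:)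
next
  case False
  then show ?thesis
    unfolding KG_pair_def by blast
qed

definition KG_matrix :: "nat \<Rightarrow> nat \<Rightarrow> (nat \<Rightarrow> nat \<Rightarrow> nat) \<Rightarrow> bool" where
  "KG_matrix n m M \<longleftrightarrow>
     (\<forall>i\<in>{1..m}. \<forall>l\<in>{1..m}. M i l \<in> {0, 1}) \<and>
     (\<forall>j\<in>{1..m}. j dvd (\<Sum>l=1..m. M j l) \<and> j dvd (\<Sum>i=1..m. M i j)) \<and>
     (\<Sum>j=1..m. \<Sum>l=1..m. M j l) = n \<and>
     (\<Sum>j=1..m. \<Sum>i=1..m. M i j) = n"

lemma KG_matrix_of_KG_pair:
  assumes "KG_pair n A B"
  shows "KG_matrix n n (\<lambda>j k. card (size_class A j \<inter> size_class B k))"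
proof -
  have A: "partition_on {1..n} A" and B: "partition_on {1..n} B"
    and at_most_one: "\<And>j k. 0 < j \<Longrightarrow> 0 < k \<Longrightarrow> card (size_class A j \<inter> size_class B k) \<le> 1"
    using assms by (auto simp: KG_pair_iff_size_classes)
  have rows: "(\<Sum>k=1..n. card (size_class A j \<inter> size_class B k)) = card (size_class A j)" for j
    using sum_card_Int_size_class[OF _ B size_class_subset[OF A]] by simp
  have cols: "(\<Sum>j=1..n. card (size_class A j \<inter> size_class B k)) = card (size_class B k)" for k
    using sum_card_Int_size_class[OF _ A size_class_subset[OF B]] by (simp add: Int_commute)
  have total: "(\<Sum>j=1..n. card (size_class P j)) = n" if "partition_on {1..n} P" for P
    using sum_card_Int_size_class[OF _ that order_refl] size_class_subset[OF that]
    by (simp add: Int_absorb1)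
  show ?thesis
    unfolding KG_matrix_def rows cols
    using total[OF A] total[OF B] dvd_card_size_class[OF _ A] dvd_card_size_class[OF _ B] at_most_one
    by (auto simp: le_Suc_eq)
qed

lemma KG_exists_of_inj_on:
  assumes "inj_on f {1..n}" "\<forall>x\<in>{1..n}. 0 < fst (f x) \<and> 0 < snd (f x)"
    "\<forall>j. j dvd card {x \<in> {1..n}. fst (f x) = j}" "\<forall>k. k dvd card {x \<in> {1..n}. snd (f x) = k}"
  shows "KG_exists n"
proof -
  obtain A where A: "partition_on {1..n} A" "\<forall>a\<in>A. \<forall>x\<in>a. card a = fst (f x)"
    using partition_with_block_sizes[of "{1..n}" "fst \<circ> f"] assms(2,3) by auto
  obtain B where B: "partition_on {1..n} B" "\<forall>b\<in>B. \<forall>x\<in>b. card b = snd (f x)"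
    using partition_with_block_sizes[of "{1..n}" "snd \<circ> f"] assms(2,4) by auto
  have "card (size_class A j \<inter> size_class B k) \<le> 1" for j k
  proof -
    have "size_class A j \<inter> size_class B k = {x \<in> {1..n}. f x = (j, k)}"
      unfolding size_class_eq_fibre[OF A] size_class_eq_fibre[OF B] by (auto simp: prod_eq_iff)
    moreover have "card {x \<in> {1..n}. f x = (j, k)} \<le> 1"
      using inj_onD[OF assms(1)] by (auto simp: card_le_Suc0_iff_eq)
    ultimately show ?thesis
      by simp
  qed
  then have "KG_pair n A B"
    using A(1) B(1) by (simp add: KG_pair_iff_size_classes)
  then show ?thesis
    unfolding KG_exists_def by blast
qed

lemma KG_exists_of_KG_matrix:
  assumes "KG_matrix n m M"
  shows "KG_exists n"
proof -
  have zero_one: "\<forall>i\<in>{1..m}. \<forall>l\<in>{1..m}. M i l \<in> {0, 1}"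
    and sums_dvd: "\<forall>j\<in>{1..m}. j dvd (\<Sum>l=1..m. M j l) \<and> j dvd (\<Sum>i=1..m. M i j)"
    and total: "(\<Sum>j=1..m. \<Sum>l=1..m. M j l) = n"
    using assms unfolding KG_matrix_def by blast+
  define S where "S = (SIGMA j:{1..m}. {l \<in> {1..m}. M j l = 1})"
  have S_sub: "S \<subseteq> {1..m} \<times> {1..m}"
    by (auto simp: S_def)
  have "card S = n"
    using total zero_one by (simp add: S_def sum_zero_one_eq_card)
  then obtain f where f: "bij_betw f {1..n} S"
    using finite_same_card_bij[of "{1..n}" S] by (auto simp: S_def)
  have fibres_dvd: "j dvd card {s \<in> S. fst s = j} \<and> j dvd card {s \<in> S. snd s = j}" for j
  proof (cases "j \<in> {1..m}")
    case True
    have "{s \<in> S. fst s = j} = {j} \<times> {l \<in> {1..m}. M j l = 1}"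
      "{s \<in> S. snd s = j} = {i \<in> {1..m}. M i j = 1} \<times> {j}"
      using True by (auto simp: S_def)
    then show ?thesis
      using sums_dvd True zero_one by (simp add: card_cartesian_product sum_zero_one_eq_card)
  next
    case False
    then have "{s \<in> S. fst s = j} = {}" "{s \<in> S. snd s = j} = {}"
      using S_sub by auto
    then show ?thesis
      by (simp only: card.empty dvd_0_right simp_thms)
  qed
  show ?thesis
  proof (rule KG_exists_of_inj_on)
    show "inj_on f {1..n}"
      using f by (rule bij_betw_imp_inj_on)
    show "\<forall>x\<in>{1..n}. 0 < fst (f x) \<and> 0 < snd (f x)"
      using bij_betw_imp_surj_on[OF f] S_sub by force
    have "card {x \<in> {1..n}. fst (f x) = j} = card {s \<in> S. fst s = j}"
      "card {x \<in> {1..n}. snd (f x) = j} = card {s \<in> S. snd s = j}" for j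
      using f by (rule bij_betw_card_filter)+
    then show "\<forall>j. j dvd card {x \<in> {1..n}. fst (f x) = j}" "\<forall>k. k dvd card {x \<in> {1..n}. snd (f x) = k}"
      using fibres_dvd by simp_all
  qed
qed

theorem lemma1:
  fixes n :: nat
  assumes "n \<ge> 1"
  shows "KG_exists n \<longleftrightarrow>
    (\<exists>m::nat. m > 0 \<and> (\<exists>M :: nat \<Rightarrow> nat \<Rightarrow> nat.
       (\<forall>i\<in>{1..m}. \<forall>l\<in>{1..m}. M i l \<in> {0, 1}) \<and>
       (\<forall>j\<in>{1..m}. j dvd (\<Sum>l=1..m. M j l) \<and> j dvd (\<Sum>i=1..m. M i j)) \<and>
       (\<Sum>j=1..m. \<Sum>l=1..m. M j l) = n \<and>
       (\<Sum>j=1..m. \<Sum>i=1..m. M i j) = n))"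
proof -
  have "KG_exists n \<longleftrightarrow> (\<exists>m>0. \<exists>M. KG_matrix n m M)"
  proof
    assume "KG_exists n"
    then obtain A B where "KG_pair n A B"
      unfolding KG_exists_def by blast
    then show "\<exists>m>0. \<exists>M. KG_matrix n m M"
      using assms KG_matrix_of_KG_pair by (intro exI[of _ n]) auto
  next
    assume "\<exists>m>0. \<exists>M. KG_matrix n m M"
    then show "KG_exists n"
      using KG_exists_of_KG_matrix by blast
  qed
  then show ?thesis
    unfolding KG_matrix_def .
qed

end
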